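(* Let $k\ge1$ and $g_k(z):=-\log f_k(e^{-z})$ for $z>0$. Then: (a) $g_k(z)\sim e^{-kz}$ as $z\to\infty$; (b) $g_k(z)\sim\frac1k\log z^{-1}$ as $z\to0^+$; (c) $g_k$ is differentiable on $(0,\infty)$ and $g_k'(z)\sim-\frac{1}{kz}$ as $z\to0^+$.
   Context: For an integer $k\ge1$, $f_k:[0,1]\to[0,1]$ denotes the unique decreasing function satisfying $f_k(x)^k-f_k(x)^{k+1}=x^k-x^{k+1}$ for all $x\in[0,1]$; it is continuous with $f_k(0)=1$, $f_k(1)=0$. The notation $F\sim G$ means $F/G\to1$. *)

theory Defs
  imports "HOL-Analysis.Analysis"
begin

text \<open>f k is the unique decreasing function [0,1] -> [0,1] with
  f(x)^k - f(x)^(k+1) = x^k - x^(k+1); outside [0,1] it is fixed to 0 so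
  that the description is unique.\<close>
definition f_fun :: "nat \<Rightarrow> real \<Rightarrow> real" where
  "f_fun k = (THE f. (\<forall>x\<in>{0..1}. f x \<in> {0..1} \<and>
                         f x ^ k - f x ^ (k+1) = x ^ k - x ^ (k+1)) \<and>
                      antimono_on {0..1} f \<and>
                      (\<forall>x. x \<notin> {0..1} \<longrightarrow> f x = 0))"

definition g_fun :: "nat \<Rightarrow> real \<Rightarrow> real" where
  "g_fun k z = - ln (f_fun k (exp (- z)))"

end

theory Submission
  imports Defs "HOL-Real_Asymp.Real_Asymp"
begin

(* Off the diagonal, the level curve y^k - y^(k+1) = x^k - x^(k+1) in (0,1)^2 is
   parametrised by the slope t = y / x > 0: with the geometric sum
   A(t) = 1 + t + ... + t^(k-1) one finds x(t) = A / (1 + t A) and y(t) = t x(t).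
   Put z(t) = - ln x(t) = ln (A + t^k) - ln A; then z is a smooth increasing
   bijection of (0,\<infinity>) with inverse t(z), and f_k(x(t)) = y(t).  Hence
       g_k(z) = z - ln t(z),   g_k'(z) = 1 - 1 / (t z'(t))   with t = t(z).

   The theorem follows by
   substituting t = t(z), which tends to \<infinity> resp. 0+ together with z. *)

lemma isCont_right_limit: "isCont f (0::real) \<Longrightarrow> (f \<longlongrightarrow> f 0) (at_right 0)"
  by (simp add: isCont_def filterlim_at_split)

lemma asymp_equiv_reparam:
  assumes "f \<sim>[G] h" "filterlim \<phi> G F"
    and "\<forall>\<^sub>F z in F. f (\<phi> z) = f' z" "\<forall>\<^sub>F z in F. h (\<phi> z) = h' z"
  shows "f' \<sim>[F] h'"
  using asymp_equiv_compose'[OF assms(1,2)] asymp_equiv_cong[OF assms(3,4)] by simp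

(* An antitone F that at every point picks either the identity or s, where s
   crosses the diagonal exactly once (at its fixed point c), must agree with s:
   a fixed point of F away from c would contradict monotonicity just beside it. *)
lemma antitone_selection:
  fixes F s :: "real \<Rightarrow> real"
  assumes "a \<le> c" "c \<le> b" "s c = c"
    and above: "\<And>x. a < x \<Longrightarrow> x < c \<Longrightarrow> x < s x"
    and below: "\<And>x. c < x \<Longrightarrow> x < b \<Longrightarrow> s x < x"
    and anti: "\<And>x y. a < x \<Longrightarrow> x \<le> y \<Longrightarrow> y < b \<Longrightarrow> F y \<le> F x"
    and select: "\<And>x. a < x \<Longrightarrow> x < b \<Longrightarrow> F x = x \<or> F x = s x"
    and x: "a < x" "x < b"
  shows "F x = s x"
proof (rule ccontr)
  assume ne: "F x \<noteq> s x"
  then have Fx: "F x = x" using select[OF x] by auto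
  define u where "u = (x + c) / 2"
  consider "x < c" | "x = c" | "c < x" by fastforce
  then show False
  proof cases
    case 1
    then have u: "x < u" "u < c" by (auto simp: u_def)
    then have "F u < u" using anti[of x u] Fx x assms(2) by fastforce
    moreover have "u < s u" using above[of u] u x by simp
    ultimately show False using select[of u] u x assms(2) by force
  next
    case 2
    then show False using ne Fx assms(3) by simp
  next
    case 3
    then have u: "u < x" "c < u" by (auto simp: u_def)
    then have "u < F u" using anti[of u x] Fx x assms(1) by fastforce
    moreover have "s u < u" using below[of u] u x by simp
    ultimately show False using select[of u] u x assms(1) by force
  qed
qed

lemma level_factor: "(y::real) ^ k - y ^ (k + 1) = y ^ k * (1 - y)"
  by (simp add: algebra_simps)

lemma level_zero_iff: "k \<ge> 1 \<Longrightarrow> (y::real) ^ k - y ^ (k + 1) = 0 \<longleftrightarrow> y = 0 \<or> y = 1"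
  unfolding level_factor by auto

definition gsum :: "nat \<Rightarrow> real \<Rightarrow> real" where
  "gsum k t = (\<Sum>i<k. t ^ i)"

definition gsum_deriv :: "nat \<Rightarrow> real \<Rightarrow> real" where
  "gsum_deriv k t = (\<Sum>i<k. real i * t ^ (i - 1))"

lemma gsum_shift: "gsum k t + t ^ k = 1 + t * gsum k t"
proof (induction k)
  case 0 then show ?case by (simp add: gsum_def)
next
  case (Suc k)
  have step: "gsum (Suc k) t = gsum k t + t ^ k" by (simp add: gsum_def)
  have "t * (gsum k t + t ^ k) = t * gsum k t + t ^ Suc k" by (simp add: algebra_simps)
  then show ?case unfolding step using Suc.IH by linarith
qed

lemma gsum_ge_1: "k \<ge> 1 \<Longrightarrow> t \<ge> 0 \<Longrightarrow> gsum k t \<ge> 1"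
proof (induction k rule: dec_induct)
  case (step n) then show ?case by (simp add: gsum_def add_increasing2)
qed (simp add: gsum_def)

lemma gsum_pos: "k \<ge> 1 \<Longrightarrow> t \<ge> 0 \<Longrightarrow> gsum k t > 0"
  using gsum_ge_1[of k t] by linarith

lemma gsum_at_0: "k \<ge> 1 \<Longrightarrow> gsum k 0 = 1"
  by (simp add: gsum_def power_0_left)

lemma gsum_mono: "0 \<le> s \<Longrightarrow> s \<le> t \<Longrightarrow> gsum k s \<le> gsum k t"
  unfolding gsum_def by (intro sum_mono power_mono) auto

lemma has_deriv_gsum: "(gsum k has_real_derivative gsum_deriv k t) (at t)"
  unfolding gsum_def gsum_deriv_def by (auto intro!: derivative_eq_intros)

lemma isCont_gsum: "isCont (gsum k) t"
  unfolding gsum_def by (intro continuous_intros)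

lemma isCont_gsum_deriv: "isCont (gsum_deriv k) t"
  unfolding gsum_deriv_def by (intro continuous_intros)

(* t A'(t) < k A(t): each term i t^i is dominated by k t^i.
   This is the positivity of the derivative of the parameter z below. *)
lemma gsum_deriv_bound:
  assumes "k \<ge> 1" "t > 0"
  shows "t * gsum_deriv k t < real k * gsum k t"
proof -
  have "t * gsum_deriv k t = (\<Sum>i<k. real i * t ^ i)"
    unfolding gsum_deriv_def sum_distrib_left by (rule sum.cong) (auto simp: power_eq_if)
  also have "\<dots> < (\<Sum>i<k. real k * t ^ i)"
    using assms by (intro sum_strict_mono) (auto simp: lessThan_empty_iff)
  also have "\<dots> = real k * gsum k t"
    by (simp add: gsum_def sum_distrib_left)
  finally show ?thesis .
qed

(* Parametrisation of the curve y^k - y^(k+1) = x^k - x^(k+1) off the diagonal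
   by the slope t = y / x. *)
definition param_x :: "nat \<Rightarrow> real \<Rightarrow> real" where
  "param_x k t = gsum k t / (1 + t * gsum k t)"

definition param_y :: "nat \<Rightarrow> real \<Rightarrow> real" where
  "param_y k t = t * param_x k t"

definition param_z :: "nat \<Rightarrow> real \<Rightarrow> real" where
  "param_z k t = ln (gsum k t + t ^ k) - ln (gsum k t)"

(* The derivative of z with respect to t, in a form that is visibly positive. *)
definition param_z_deriv :: "nat \<Rightarrow> real \<Rightarrow> real" where
  "param_z_deriv k t =
     t ^ (k - 1) * (real k * gsum k t - t * gsum_deriv k t) / (gsum k t * (gsum k t + t ^ k))"

lemma param_y_solves:
  assumes "k \<ge> 1" "t \<ge> 0"
  shows "param_y k t ^ k - param_y k t ^ (k + 1) = param_x k t ^ k - param_x k t ^ (k + 1)"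
proof -
  define D where "D = 1 + t * gsum k t"
  have "D > 0" using gsum_pos[OF assms] assms by (simp add: D_def add_pos_nonneg)
  have x_compl: "1 - param_x k t = t ^ k / D"
    using \<open>D > 0\<close> gsum_shift[of k t] by (simp add: param_x_def D_def[symmetric] field_simps)
  have y_compl: "1 - param_y k t = 1 / D"
    using \<open>D > 0\<close> by (simp add: param_y_def param_x_def D_def[symmetric] field_simps)
  have "param_y k t ^ k - param_y k t ^ (k + 1) = param_y k t ^ k * (1 - param_y k t)"
    by (simp add: algebra_simps)
  also have "\<dots> = param_x k t ^ k * (1 - param_x k t)"
    unfolding x_compl y_compl by (simp add: param_y_def power_mult_distrib)
  also have "\<dots> = param_x k t ^ k - param_x k t ^ (k + 1)"
    by (simp add: algebra_simps)
  finally show ?thesis .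
qed

lemma param_x_eq_exp:
  assumes "k \<ge> 1" "t \<ge> 0"
  shows "param_x k t = exp (- param_z k t)"
proof -
  have A: "gsum k t > 0" using gsum_pos[OF assms] .
  then have B: "gsum k t + t ^ k > 0" using assms by (simp add: add_pos_nonneg)
  have "param_x k t = gsum k t / (gsum k t + t ^ k)"
    by (simp add: param_x_def gsum_shift)
  also have "\<dots> = exp (- param_z k t)"
    using A B by (simp add: param_z_def exp_diff)
  finally show ?thesis .
qed

lemma param_z_eq:
  assumes "k \<ge> 1" "t \<ge> 0"
  shows "param_z k t = ln (1 + t ^ k / gsum k t)" and "param_z k t = ln (t + 1 / gsum k t)"
proof -
  have A: "gsum k t > 0" using gsum_pos[OF assms] .
  then have B: "gsum k t + t ^ k > 0" using assms by (simp add: add_pos_nonneg)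
  have "param_z k t = ln ((gsum k t + t ^ k) / gsum k t)"
    using A B by (simp add: param_z_def ln_div)
  moreover have "(gsum k t + t ^ k) / gsum k t = 1 + t ^ k / gsum k t"
    and "(gsum k t + t ^ k) / gsum k t = t + 1 / gsum k t"
    using A gsum_shift[of k t] by (simp_all add: field_simps)
  ultimately show "param_z k t = ln (1 + t ^ k / gsum k t)" "param_z k t = ln (t + 1 / gsum k t)"
    by simp_all
qed

lemma has_deriv_param_z:
  assumes "k \<ge> 1" "t \<ge> 0"
  shows "(param_z k has_real_derivative param_z_deriv k t) (at t)"
proof -
  have A: "gsum k t > 0" using gsum_pos[OF assms] .
  then have B: "gsum k t + t ^ k > 0" using assms by (simp add: add_pos_nonneg)
  have tk: "t * t ^ (k - 1) = t ^ k" using assms by (cases k) auto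
  have "(param_z k has_real_derivative
          (gsum_deriv k t + real k * t ^ (k - 1)) / (gsum k t + t ^ k)
            - gsum_deriv k t / gsum k t) (at t)"
    unfolding param_z_def[abs_def] using A B
    by (auto intro!: derivative_eq_intros has_deriv_gsum)
  moreover have "(gsum_deriv k t + real k * t ^ (k - 1)) / (gsum k t + t ^ k)
                   - gsum_deriv k t / gsum k t = param_z_deriv k t"
    using A B by (simp add: param_z_deriv_def field_simps tk[symmetric])
  ultimately show ?thesis by simp
qed

lemma param_z_deriv_pos:
  assumes "k \<ge> 1" "t > 0"
  shows "param_z_deriv k t > 0"
proof -
  have A: "gsum k t > 0" using gsum_pos[of k t] assms by simp
  then have "gsum k t + t ^ k > 0" using assms by (simp add: add_pos_pos)
  then show ?thesis
    using A gsum_deriv_bound[OF assms] assms by (simp add: param_z_deriv_def)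
qed

lemma param_z_at_0: "k \<ge> 1 \<Longrightarrow> param_z k 0 = 0"
  by (simp add: param_z_def gsum_at_0 power_0_left)

lemma isCont_param_z: "k \<ge> 1 \<Longrightarrow> t \<ge> 0 \<Longrightarrow> isCont (param_z k) t"
  using has_deriv_param_z DERIV_isCont by blast

lemma param_z_less:
  assumes "k \<ge> 1" "0 \<le> s" "s < t"
  shows "param_z k s < param_z k t"
proof (rule DERIV_pos_imp_increasing_open[OF \<open>s < t\<close>])
  show "\<exists>y. (param_z k has_real_derivative y) (at x) \<and> y > 0" if "s < x" "x < t" for x
    using that assms has_deriv_param_z param_z_deriv_pos by (meson le_less_trans less_imp_le)
  show "continuous_on {s..t} (param_z k)"
    using assms by (intro continuous_at_imp_continuous_on ballI isCont_param_z) auto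
qed

lemma param_z_less_iff:
  assumes "k \<ge> 1" "s \<ge> 0" "t \<ge> 0"
  shows "param_z k s < param_z k t \<longleftrightarrow> s < t"
  using param_z_less[of k s t] param_z_less[of k t s] assms
  by (cases s t rule: linorder_cases) auto

lemma param_z_pos: "k \<ge> 1 \<Longrightarrow> t > 0 \<Longrightarrow> param_z k t > 0"
  using param_z_less[of k 0 t] by (simp add: param_z_at_0)

lemma param_z_bounds:
  assumes "k \<ge> 1" "t > 0"
  shows "ln t < param_z k t" "param_z k t \<le> ln (t + 1)"
proof -
  have "0 < 1 / gsum k t" "1 / gsum k t \<le> 1"
    using gsum_ge_1[of k t] assms by auto
  then have "ln t < ln (t + 1 / gsum k t)" "ln (t + 1 / gsum k t) \<le> ln (t + 1)"
    using assms by (simp_all add: add_pos_pos)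
  then show "ln t < param_z k t" "param_z k t \<le> ln (t + 1)"
    using assms by (simp_all add: param_z_eq(2))
qed

definition zinv :: "nat \<Rightarrow> real \<Rightarrow> real" where
  "zinv k = the_inv_into {0<..} (param_z k)"

lemma inj_on_param_z:
  assumes "k \<ge> 1"
  shows "inj_on (param_z k) {0<..}"
proof (rule inj_onI)
  fix s t :: real
  assume "s \<in> {0<..}" "t \<in> {0<..}" "param_z k s = param_z k t"
  then show "s = t"
    using param_z_less_iff[OF assms, of s t] param_z_less_iff[OF assms, of t s]
    by (cases s t rule: linorder_cases) auto
qed

(* z maps (0, \<infinity>) onto (0, \<infinity>): by the intermediate value theorem,
   since z(0) = 0 and z(exp w) > w. *)
lemma param_z_image: assumes "k \<ge> 1" shows "param_z k ` {0<..} = {0<..}"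
proof
  show "param_z k ` {0<..} \<subseteq> {0<..}" using param_z_pos[OF assms] by auto
  show "{0<..} \<subseteq> param_z k ` {0<..}"
  proof
    fix z :: real assume "z \<in> {0<..}"
    then have z: "param_z k 0 < z" "z < param_z k (exp z)"
      using param_z_at_0[OF assms] param_z_bounds(1)[OF assms, of "exp z"] by auto
    have "continuous_on {0..exp z} (param_z k)"
      using assms by (intro continuous_at_imp_continuous_on ballI isCont_param_z) auto
    then obtain t where "0 \<le> t" "t \<le> exp z" "param_z k t = z"
      using IVT'[of "param_z k" 0 z "exp z"] z by auto
    with z show "z \<in> param_z k ` {0<..}"
      by (cases "t = 0") auto
  qed
qed

lemma zinv_right_inverse:
  assumes "k \<ge> 1" "z > 0"
  shows "zinv k z > 0" "param_z k (zinv k z) = z"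
proof -
  have "z \<in> param_z k ` {0<..}" using param_z_image assms by auto
  then show "zinv k z > 0" "param_z k (zinv k z) = z"
    using the_inv_into_into[OF inj_on_param_z] f_the_inv_into_f[OF inj_on_param_z] assms
    by (auto simp: zinv_def)
qed

lemma zinv_param_z: "k \<ge> 1 \<Longrightarrow> t > 0 \<Longrightarrow> zinv k (param_z k t) = t"
  unfolding zinv_def by (rule the_inv_into_f_f[OF inj_on_param_z]) auto

lemma zinv_less_iff:
  assumes "k \<ge> 1" "z > 0" "w > 0"
  shows "zinv k z < zinv k w \<longleftrightarrow> z < w"
  using param_z_less_iff[of k "zinv k z" "zinv k w"] assms(1)
    zinv_right_inverse[OF assms(1,2)] zinv_right_inverse[OF assms(1,3)]
  by simp

lemma zinv_at_top:
  assumes "k \<ge> 1"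
  shows "filterlim (zinv k) at_top at_top"
proof (rule filterlim_at_top_mono)
  show "filterlim (\<lambda>z::real. exp z - 1) at_top at_top" by real_asymp
  show "\<forall>\<^sub>F z in at_top. exp z - 1 \<le> zinv k z"
    using eventually_gt_at_top[of 0]
  proof eventually_elim
    case (elim z)
    have "z \<le> ln (zinv k z + 1)"
      using param_z_bounds(2)[OF assms zinv_right_inverse(1)[OF assms elim]]
        zinv_right_inverse(2)[OF assms elim] by simp
    then have "exp z \<le> zinv k z + 1"
      using zinv_right_inverse(1)[OF assms elim] by (simp add: ln_ge_iff)
    then show ?case by simp
  qed
qed

lemma zinv_at_right_0:
  assumes "k \<ge> 1"
  shows "filterlim (zinv k) (at_right 0) (at_right 0)"
proof (rule tendsto_imp_filterlim_at_right)
  show pos: "\<forall>\<^sub>F z in at_right 0. zinv k z > 0"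
    by (rule eventually_at_rightI[of 0 1]) (use zinv_right_inverse(1)[OF assms] in auto)
  show "(zinv k \<longlongrightarrow> 0) (at_right 0)"
  proof (rule order_tendstoI)
    fix a :: real assume "a < 0"
    with pos show "\<forall>\<^sub>F z in at_right 0. a < zinv k z"
      by (auto elim: eventually_mono)
  next
    fix a :: real assume a: "a > 0"
    have "param_z k a > 0" using param_z_pos[OF assms a] .
    show "\<forall>\<^sub>F z in at_right 0. zinv k z < a"
    proof (rule eventually_at_rightI[of 0 "param_z k a"])
      fix z assume "z \<in> {0<..<param_z k a}"
      then have "zinv k z < zinv k (param_z k a)"
        using zinv_less_iff[OF assms _ \<open>param_z k a > 0\<close>] by auto
      then show "zinv k z < a" using zinv_param_z[OF assms a] by simp
    qed fact
  qed
qed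

lemma isCont_zinv:
  assumes "k \<ge> 1" "z > 0"
  shows "isCont (zinv k) z"
proof -
  define t where "t = zinv k z"
  have t: "t > 0" "param_z k t = z" using zinv_right_inverse[OF assms] by (auto simp: t_def)
  have near: "u > 0" if "\<bar>u - t\<bar> \<le> t / 2" for u
    using abs_le_D2[OF that] t(1) by linarith
  have "isCont (zinv k) (param_z k t)"
  proof (rule isCont_inverse_function[where f = "param_z k" and x = t and d = "t / 2"])
    fix u assume "\<bar>u - t\<bar> \<le> t / 2"
    then have "u > 0" by (rule near)
    then show "zinv k (param_z k u) = u" "isCont (param_z k) u"
      using zinv_param_z[OF assms(1)] isCont_param_z[OF assms(1)] by auto
  qed (use t in simp)
  then show ?thesis using t by simp
qed

lemma has_deriv_zinv:
  assumes "k \<ge> 1" "z > 0"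
  shows "(zinv k has_real_derivative inverse (param_z_deriv k (zinv k z))) (at z)"
proof (rule DERIV_inverse_function[where f = "param_z k" and a = 0 and b = "z + 1"])
  show "(param_z k has_real_derivative param_z_deriv k (zinv k z)) (at (zinv k z))"
    using has_deriv_param_z[OF assms(1)] zinv_right_inverse[OF assms] by simp
  show "param_z_deriv k (zinv k z) \<noteq> 0"
    using param_z_deriv_pos[OF assms(1) zinv_right_inverse(1)[OF assms]] by simp
  show "param_z k (zinv k y) = y" if "0 < y" "y < z + 1" for y
    using zinv_right_inverse(2)[OF assms(1)] that by simp
qed (use assms isCont_zinv in auto)

lemma param_x_less_iff:
  assumes "k \<ge> 1" "s \<ge> 0" "t \<ge> 0"
  shows "param_x k t < param_x k s \<longleftrightarrow> s < t"
  using param_z_less_iff[OF assms] param_x_eq_exp[OF assms(1,2)] param_x_eq_exp[OF assms(1,3)]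
  by simp

lemma param_x_bounds:
  assumes "k \<ge> 1" "t > 0"
  shows "0 < param_x k t" "param_x k t < 1"
  using param_z_pos[OF assms] param_x_eq_exp[OF assms(1)] assms by simp_all

lemma param_x_zinv:
  assumes "k \<ge> 1" "0 < x" "x < 1"
  shows "param_x k (zinv k (- ln x)) = x"
  using zinv_right_inverse[OF assms(1), of "- ln x"] assms
    param_x_eq_exp[OF assms(1), of "zinv k (- ln x)"]
  by simp

lemma param_y_bounds:
  assumes "k \<ge> 1" "t > 0"
  shows "0 < param_y k t" "param_y k t < 1"
proof -
  have "t * gsum k t > 0" using gsum_pos[of k t] assms by simp
  then show "0 < param_y k t" "param_y k t < 1"
    by (simp_all add: param_y_def param_x_def field_simps)
qed

lemma param_y_less:
  assumes "k \<ge> 1" "0 < s" "s < t"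
  shows "param_y k s < param_y k t"
proof -
  have As: "gsum k s > 0" using gsum_pos[of k s] assms by simp
  have "s * gsum k s < t * gsum k s" using As assms by simp
  also have "\<dots> \<le> t * gsum k t" using gsum_mono[of s t k] assms by simp
  finally have "s * gsum k s < t * gsum k t" .
  moreover have "s * gsum k s > 0" using As assms by simp
  ultimately show ?thesis by (simp add: param_y_def param_x_def field_simps)
qed

(* The explicit candidate for f_k: on (0,1), x is sent to y(t) for the slope t with
   x(t) = x, i.e. t = t(-ln x); the endpoints are swapped and the function vanishes
   outside [0,1]. *)
definition f_param :: "nat \<Rightarrow> real \<Rightarrow> real" where
  "f_param k x =
     (if 0 < x \<and> x < 1 then param_y k (zinv k (- ln x)) else if x = 0 then 1 else 0)"

lemma f_param_eq:
  assumes "k \<ge> 1" "0 < x" "x < 1"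
  shows "f_param k x = zinv k (- ln x) * x"
  using param_x_zinv[OF assms] assms by (simp add: f_param_def param_y_def)

lemma f_param_solves:
  assumes "k \<ge> 1" "0 < x" "x < 1"
  shows "0 < f_param k x" "f_param k x < 1"
    and "f_param k x ^ k - f_param k x ^ (k + 1) = x ^ k - x ^ (k + 1)"
proof -
  define t where "t = zinv k (- ln x)"
  have t: "t > 0"
    using zinv_right_inverse(1)[OF assms(1), of "- ln x"] assms by (simp add: t_def)
  have "f_param k x = param_y k t" using assms by (simp add: f_param_def t_def)
  then show "0 < f_param k x" "f_param k x < 1"
    and "f_param k x ^ k - f_param k x ^ (k + 1) = x ^ k - x ^ (k + 1)"
    using param_y_bounds[OF assms(1) t] param_y_solves[OF assms(1), of t] t
      param_x_zinv[OF assms] by (simp_all add: t_def)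
qed

lemma f_param_less:
  assumes "k \<ge> 1" "0 < x" "x < y" "y < 1"
  shows "f_param k y < f_param k x"
proof -
  have "zinv k (- ln y) < zinv k (- ln x)"
    using zinv_less_iff[OF assms(1)] assms by simp
  moreover have "zinv k (- ln y) > 0" using zinv_right_inverse(1)[OF assms(1)] assms by simp
  ultimately show ?thesis using param_y_less[OF assms(1)] assms by (simp add: f_param_def)
qed

(* Every solution y \<noteq> x of the level equation in (0,1) is f_param k x:
   writing y = t x, the equation becomes linear in x with solution x = x(t). *)
lemma other_solution_is_f_param:
  assumes "k \<ge> 1" "0 < x" "x < 1" "0 < y" "y < 1" "y \<noteq> x"
    and level: "y ^ k - y ^ (k + 1) = x ^ k - x ^ (k + 1)"
  shows "y = f_param k x"
proof -
  define t where "t = y / x"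
  define A where "A = gsum k t"
  have t: "t > 0" "y = t * x" using assms by (auto simp: t_def)
  have "t \<noteq> 1" using assms t by auto
  have "x ^ k * (1 - x) = x ^ k * (t ^ k * (1 - t * x))"
    using level unfolding t(2) level_factor by (simp add: power_mult_distrib algebra_simps)
  then have "1 - x = t ^ k * (1 - t * x)" using assms by simp
  moreover have "t ^ k = 1 + t * A - A" using gsum_shift[of k t] by (simp add: A_def)
  moreover have "(t - 1) * (x * (1 + t * A) - A) = (1 - x) - (1 + t * A - A) * (1 - t * x)"
    by (simp add: algebra_simps)
  ultimately have "(t - 1) * (x * (1 + t * A) - A) = 0" by simp
  then have "x * (1 + t * A) = A" using \<open>t \<noteq> 1\<close> by simp
  moreover have "1 + t * A > 0" using gsum_pos[OF assms(1), of t] t by (simp add: A_def add_pos_pos)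
  ultimately have "x = param_x k t" by (simp add: param_x_def A_def[symmetric] field_simps)
  then have "zinv k (- ln x) = t"
    using param_x_eq_exp[OF assms(1), of t] zinv_param_z[OF assms(1) t(1)] t by simp
  then show ?thesis using f_param_eq assms t by simp
qed

(* f_param crosses the diagonal exactly at x(1) = k / (k + 1). *)
lemma f_param_fixed_point:
  assumes "k \<ge> 1"
  shows "f_param k (param_x k 1) = param_x k 1"
proof -
  have "- ln (param_x k 1) = param_z k 1" using param_x_eq_exp[OF assms, of 1] by simp
  then show ?thesis
    using f_param_eq[OF assms param_x_bounds[OF assms, of 1]] zinv_param_z[OF assms, of 1] by simp
qed

lemma f_param_crossing:
  assumes "k \<ge> 1" "0 < x" "x < 1"
  shows "x < param_x k 1 \<Longrightarrow> x < f_param k x" "param_x k 1 < x \<Longrightarrow> f_param k x < x"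
proof -
  define t where "t = zinv k (- ln x)"
  have t: "t > 0"
    using zinv_right_inverse(1)[OF assms(1), of "- ln x"] assms by (simp add: t_def)
  have x: "param_x k t = x" using param_x_zinv[OF assms] by (simp add: t_def)
  have "1 < t \<Longrightarrow> x < t * x" "t < 1 \<Longrightarrow> t * x < x" using assms(2) by simp_all
  then show "x < param_x k 1 \<Longrightarrow> x < f_param k x" "param_x k 1 < x \<Longrightarrow> f_param k x < x"
    using param_x_less_iff[OF assms(1), of 1 t] param_x_less_iff[OF assms(1), of t 1] t x
      f_param_eq[OF assms] by (simp_all add: t_def)
qed

definition f_spec :: "nat \<Rightarrow> (real \<Rightarrow> real) \<Rightarrow> bool" where
  "f_spec k f \<longleftrightarrow> (\<forall>x\<in>{0..1}. f x \<in> {0..1} \<and> f x ^ k - f x ^ (k+1) = x ^ k - x ^ (k+1)) \<and>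
                  antimono_on {0..1} f \<and> (\<forall>x. x \<notin> {0..1} \<longrightarrow> f x = 0)"

lemma f_param_spec:
  assumes "k \<ge> 1"
  shows "f_spec k (f_param k)"
  unfolding f_spec_def
proof (intro conjI ballI allI impI)
  fix x :: real assume x: "x \<in> {0..1}"
  show "f_param k x \<in> {0..1}"
    using f_param_solves[OF assms, of x] x by (auto simp: f_param_def)
  show "f_param k x ^ k - f_param k x ^ (k + 1) = x ^ k - x ^ (k + 1)"
    using f_param_solves[OF assms, of x] x assms by (auto simp: f_param_def power_0_left)
next
  show "antimono_on {0..1} (f_param k)"
  proof (rule monotone_onI)
    fix x y :: real assume xy: "x \<in> {0..1}" "y \<in> {0..1}" "x \<le> y"
    show "f_param k y \<le> f_param k x"
    proof (cases "x = y \<or> x = 0 \<or> y = 1")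
      case True
      then show ?thesis using f_param_solves[OF assms, of x] f_param_solves[OF assms, of y] xy
        by (auto simp: f_param_def)
    next
      case False
      then show ?thesis using f_param_less[OF assms, of x y] xy by force
    qed
  qed
qed (auto simp: f_param_def)

lemma f_spec_value:
  assumes "k \<ge> 1" "f_spec k F" "x \<in> {0..1}"
  shows "F x \<in> {0, 1} \<longleftrightarrow> x \<in> {0, 1}"
    and "0 < x \<Longrightarrow> x < 1 \<Longrightarrow> F x = x \<or> F x = f_param k x"
proof -
  have range: "0 \<le> F x" "F x \<le> 1" and level: "F x ^ k - F x ^ (k + 1) = x ^ k - x ^ (k + 1)"
    using assms(2,3) by (auto simp: f_spec_def)
  then show F01: "F x \<in> {0, 1} \<longleftrightarrow> x \<in> {0, 1}"
    using level_zero_iff[OF assms(1), of x] level_zero_iff[OF assms(1), of "F x"] by auto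
  show "F x = x \<or> F x = f_param k x" if "0 < x" "x < 1"
    using other_solution_is_f_param[OF assms(1) that, of "F x"] F01 range level that by auto
qed

(* The defining property determines f_param; the interior is antitone_selection,
   the endpoint values are forced by monotonicity. *)
lemma f_spec_unique:
  assumes "k \<ge> 1" and spec: "f_spec k F"
  shows "F = f_param k"
proof
  define c where "c = param_x k 1"
  have c: "0 < c" "c < 1" using param_x_bounds[OF assms(1), of 1] by (simp_all add: c_def)
  have anti: "F y \<le> F x" if "x \<in> {0..1}" "y \<in> {0..1}" "x \<le> y" for x y
    using spec that monotone_onD[of "{0..1}" "(\<le>)" "\<lambda>x y. y \<le> x" F x y]
    by (auto simp: f_spec_def)
  have Fc: "0 < F c" "F c < 1"
    using f_spec_value(1)[OF assms, of c] f_spec_value(1)[OF assms, of 0]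
      f_spec_value(1)[OF assms, of 1] c anti[of 0 c] anti[of c 1] by auto
  fix x :: real
  consider "x \<notin> {0..1}" | "x = 0" | "x = 1" | "0 < x" "x < 1" by fastforce
  then show "F x = f_param k x"
  proof cases
    case 1
    then show ?thesis using spec by (auto simp: f_spec_def f_param_def)
  next
    case 2
    then show ?thesis
      using f_spec_value(1)[OF assms, of 0] anti[of 0 c] Fc c by (auto simp: f_param_def)
  next
    case 3
    then show ?thesis
      using f_spec_value(1)[OF assms, of 1] anti[of c 1] Fc c by (auto simp: f_param_def)
  next
    case 4
    show ?thesis
    proof (rule antitone_selection[where a = 0 and c = c and b = 1 and s = "f_param k"])
      show "f_param k c = c" unfolding c_def by (rule f_param_fixed_point[OF assms(1)])
    qed (use c 4 f_param_crossing[OF assms(1)] anti f_spec_value(2)[OF assms]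
         in \<open>auto simp: c_def\<close>)
  qed
qed

lemma f_fun_eq_f_param: "k \<ge> 1 \<Longrightarrow> f_fun k = f_param k"
  unfolding f_fun_def f_spec_def[symmetric]
  using f_param_spec f_spec_unique by (rule the_equality)

(* g_fun in the parameter t: since f_k (exp (-z(t))) = y(t) = t exp (-z(t)),
   we get g_fun k (z(t)) = z(t) - ln t. *)
definition param_g :: "nat \<Rightarrow> real \<Rightarrow> real" where
  "param_g k t = param_z k t - ln t"

lemma g_fun_eq:
  assumes "k \<ge> 1" "z > 0"
  shows "g_fun k z = param_g k (zinv k z)"
proof -
  have x: "0 < exp (- z)" "exp (- z) < 1" using assms(2) by auto
  have "f_fun k (exp (- z)) = zinv k z * exp (- z)"
    using f_param_eq[OF assms(1) x] by (simp add: f_fun_eq_f_param[OF assms(1)])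
  then show ?thesis
    using zinv_right_inverse[OF assms] by (simp add: g_fun_def param_g_def ln_mult)
qed

lemma param_g_eq_ln:
  assumes "k \<ge> 1" "t > 0"
  shows "param_g k t = ln (1 + 1 / (t * gsum k t))"
proof -
  have A: "gsum k t > 0" using gsum_pos[OF assms(1)] assms(2) by simp
  then have "t + 1 / gsum k t > 0" using assms(2) by (simp add: add_pos_pos)
  then have "param_g k t = ln ((t + 1 / gsum k t) / t)"
    using param_z_eq(2)[OF assms(1), of t] assms(2) by (simp add: param_g_def ln_div)
  also have "(t + 1 / gsum k t) / t = 1 + 1 / (t * gsum k t)"
    using A assms(2) by (simp add: field_simps)
  finally show ?thesis .
qed

lemma has_deriv_g_fun:
  assumes "k \<ge> 1" "z > 0"
  shows "(g_fun k has_real_derivative 1 - 1 / (zinv k z * param_z_deriv k (zinv k z))) (at z)"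
proof -
  have t: "zinv k z > 0" using zinv_right_inverse(1)[OF assms] .
  have "((\<lambda>z. z - ln (zinv k z)) has_real_derivative
           1 - inverse (param_z_deriv k (zinv k z)) / zinv k z) (at z)"
    using t by (auto intro!: derivative_eq_intros has_deriv_zinv[OF assms])
  moreover have "inverse (param_z_deriv k (zinv k z)) / zinv k z
                   = 1 / (zinv k z * param_z_deriv k (zinv k z))"
    by (simp add: field_simps)
  ultimately have deriv: "((\<lambda>z. z - ln (zinv k z)) has_real_derivative
           1 - 1 / (zinv k z * param_z_deriv k (zinv k z))) (at z)"
    by simp
  have "g_fun k w = w - ln (zinv k w)" if "w \<in> {0<..}" for w
    using g_fun_eq[OF assms(1)] zinv_right_inverse(2)[OF assms(1)] that by (simp add: param_g_def)
  then show ?thesis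
    using has_field_derivative_transform_within_open[OF deriv, of "{0<..}"] assms(2) by simp
qed

(* (a) in the parameter: with u = t A(t) \<rightarrow> \<infinity>, g = ln (1 + 1/u) \<sim> 1/u,
   and 1/u \<sim> x(t)^k because t^k / u = 1/u + 1 - 1/t and t x(t) = u / (1 + u). *)
lemma param_g_large:
  assumes "k \<ge> 1"
  shows "param_g k \<sim>[at_top] (\<lambda>t. param_x k t ^ k)"
proof (rule asymp_equivI')
  define u where "u t = t * gsum k t" for t
  have u_ge: "t \<le> u t" if "t > 0" for t
    using gsum_ge_1[OF assms, of t] that by (simp add: u_def)
  have u_top: "filterlim u at_top at_top"
    by (rule filterlim_at_top_mono[OF filterlim_ident])
       (rule eventually_mono[OF eventually_gt_at_top[of 0] u_ge])
  have "((\<lambda>v::real. v * ln (1 + 1 / v)) \<longlongrightarrow> 1) at_top"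
    "((\<lambda>v::real. v / (1 + v)) \<longlongrightarrow> 1) at_top" "((\<lambda>v::real. 1 / v) \<longlongrightarrow> 0) at_top"
    by real_asymp+
  then have "((\<lambda>t. u t * ln (1 + 1 / u t) * (1 / u t + 1 - 1 / t) / (u t / (1 + u t)) ^ k)
               \<longlongrightarrow> 1 * (0 + 1 - 0) / 1 ^ k) at_top"
    by (intro tendsto_intros filterlim_compose[OF _ u_top]) auto
  then have lim: "((\<lambda>t. u t * ln (1 + 1 / u t) * (1 / u t + 1 - 1 / t) / (u t / (1 + u t)) ^ k)
               \<longlongrightarrow> 1) at_top"
    by simp
  have eq: "u t * ln (1 + 1 / u t) * (1 / u t + 1 - 1 / t) / (u t / (1 + u t)) ^ k
          = param_g k t / param_x k t ^ k" if "t > 0" for t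
  proof -
    have A: "gsum k t > 0" using gsum_pos[OF assms] that by simp
    then have "u t > 0" using that by (simp add: u_def)
    have g: "param_g k t = ln (1 + 1 / u t)"
      using param_g_eq_ln[OF assms that] by (simp add: u_def)
    have tk: "t ^ k = 1 + u t - gsum k t" using gsum_shift[of k t] by (simp add: u_def)
    have "1 / u t + 1 - 1 / t = t ^ k / u t"
      unfolding tk using A that by (simp add: u_def field_simps)
    moreover have "u t / (1 + u t) = t * param_x k t" by (simp add: param_x_def u_def)
    ultimately show ?thesis
      unfolding g using \<open>u t > 0\<close> that by (simp add: power_mult_distrib)
  qed
  have "\<forall>\<^sub>F t in at_top. u t * ln (1 + 1 / u t) * (1 / u t + 1 - 1 / t) / (u t / (1 + u t)) ^ k
               = param_g k t / param_x k t ^ k"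
    by (rule eventually_mono[OF eventually_gt_at_top[of 0] eq])
  then show "((\<lambda>t. param_g k t / param_x k t ^ k) \<longlongrightarrow> 1) at_top"
    by (rule Lim_transform_eventually[OF lim])
qed

(* z(t) \<sim> t^k as t \<rightarrow> 0+, since z = ln (1 + t^k / A) and A(t) \<rightarrow> 1. *)
lemma param_z_small:
  assumes "k \<ge> 1"
  shows "((\<lambda>t. param_z k t / t ^ k) \<longlongrightarrow> 1) (at_right 0)"
proof -
  define w where "w t = t ^ k / gsum k t" for t
  have "isCont w 0" unfolding w_def using gsum_at_0[OF assms]
    by (intro continuous_intros isCont_gsum) auto
  then have "(w \<longlongrightarrow> 0) (at_right 0)"
    using isCont_right_limit[of w] assms by (simp add: w_def power_0_left)
  moreover have "\<forall>\<^sub>F t in at_right 0. w t > 0"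
    by (rule eventually_at_rightI[of 0 1]) (use gsum_pos[OF assms] in \<open>auto simp: w_def\<close>)
  ultimately have w: "filterlim w (at_right 0) (at_right 0)"
    by (rule tendsto_imp_filterlim_at_right)
  have "((\<lambda>v::real. ln (1 + v) / v) \<longlongrightarrow> 1) (at_right 0)" by real_asymp
  then have "((\<lambda>t. ln (1 + w t) / w t) \<longlongrightarrow> 1) (at_right 0)"
    by (rule filterlim_compose[OF _ w])
  moreover have "(gsum k \<longlongrightarrow> 1) (at_right 0)"
    using isCont_right_limit[OF isCont_gsum[where k = k and t = 0]] gsum_at_0[OF assms] by simp
  ultimately have "((\<lambda>t. ln (1 + w t) / w t * (1 / gsum k t)) \<longlongrightarrow> 1 * (1 / 1)) (at_right 0)"
    by (intro tendsto_intros) auto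
  moreover have "\<forall>\<^sub>F t in at_right 0. ln (1 + w t) / w t * (1 / gsum k t) = param_z k t / t ^ k"
  proof (rule eventually_at_rightI[of 0 1])
    fix t :: real assume "t \<in> {0<..<1}"
    then show "ln (1 + w t) / w t * (1 / gsum k t) = param_z k t / t ^ k"
      using param_z_eq(1)[OF assms, of t] gsum_pos[OF assms, of t] by (simp add: w_def)
  qed simp
  ultimately show ?thesis by (simp add: tendsto_cong)
qed

lemma param_z_to_0: "k \<ge> 1 \<Longrightarrow> (param_z k \<longlongrightarrow> 0) (at_right 0)"
  using isCont_right_limit[OF isCont_param_z] param_z_at_0 by fastforce

(* (b) in the parameter: g = z - ln t and (1/k) ln (1/z) = - ln t - (1/k) ln (z / t^k),
   where z \<rightarrow> 0 and ln (z / t^k) \<rightarrow> 0 while ln t \<rightarrow> -\<infinity>. *)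
lemma param_g_small:
  assumes "k \<ge> 1"
  shows "param_g k \<sim>[at_right 0] (\<lambda>t. (1 / real k) * ln (1 / param_z k t))"
proof (rule asymp_equivI')
  define e where "e t = ln (param_z k t / t ^ k)" for t
  have "(e \<longlongrightarrow> ln 1) (at_right 0)"
    unfolding e_def by (intro tendsto_intros param_z_small[OF assms]) simp
  moreover have "((\<lambda>t::real. 1 / ln t) \<longlongrightarrow> 0) (at_right 0)" by real_asymp
  ultimately have "((\<lambda>t. (1 - param_z k t * (1 / ln t)) / (1 + e t * (1 / ln t) / real k))
                      \<longlongrightarrow> (1 - 0 * 0) / (1 + ln 1 * 0 / real k)) (at_right 0)"
    using assms by (intro tendsto_intros param_z_to_0[OF assms]) auto
  then have lim: "((\<lambda>t. (1 - param_z k t * (1 / ln t)) / (1 + e t * (1 / ln t) / real k))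
                      \<longlongrightarrow> 1) (at_right 0)"
    by simp
  have small: "\<forall>\<^sub>F t in at_right 0. param_z k t < 1"
    using param_z_to_0[OF assms] by (rule order_tendstoD) simp
  have "\<forall>\<^sub>F t::real in at_right 0. t < 1" by (rule eventually_at_rightI[of 0 1]) auto
  with small have "\<forall>\<^sub>F t in at_right 0.
      (1 - param_z k t * (1 / ln t)) / (1 + e t * (1 / ln t) / real k)
        = param_g k t / ((1 / real k) * ln (1 / param_z k t))"
    using eventually_at_right_less[of 0]
  proof eventually_elim
    case (elim t)
    have z: "0 < param_z k t" using param_z_pos[OF assms] elim by simp
    have "ln t < 0" "ln (param_z k t) < 0" using elim z by simp_all
    moreover have "e t = ln (param_z k t) - real k * ln t"
      using z elim by (simp add: e_def ln_div ln_realpow)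
    ultimately show ?case
      using assms z by (simp add: param_g_def ln_div field_simps)
  qed
  then show "((\<lambda>t. param_g k t / ((1 / real k) * ln (1 / param_z k t))) \<longlongrightarrow> 1) (at_right 0)"
    by (rule Lim_transform_eventually[OF lim])
qed

(* (c) in the parameter: the ratio equals -k z + k (z / t^k) A (A + t^k) / (k A - t A'),
   which tends to 0 + k \<cdot> 1 \<cdot> 1 / k = 1. *)
lemma param_g_deriv_small:
  assumes "k \<ge> 1"
  shows "(\<lambda>t. 1 - 1 / (t * param_z_deriv k t)) \<sim>[at_right 0] (\<lambda>t. - 1 / (real k * param_z k t))"
proof (rule asymp_equivI')
  define D where "D t = real k * gsum k t - t * gsum_deriv k t" for t
  have gsum: "(gsum k \<longlongrightarrow> 1) (at_right 0)"
    using isCont_right_limit[OF isCont_gsum[where k = k and t = 0]] gsum_at_0[OF assms] by simp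
  have "(gsum_deriv k \<longlongrightarrow> gsum_deriv k 0) (at_right 0)"
    by (rule isCont_right_limit[OF isCont_gsum_deriv])
  then have "(D \<longlongrightarrow> real k * 1 - 0 * gsum_deriv k 0) (at_right 0)"
    unfolding D_def by (intro tendsto_intros gsum tendsto_ident_at)
  then have "((\<lambda>t. - real k * param_z k t
                  + real k * (param_z k t / t ^ k) * (gsum k t * (gsum k t + t ^ k)) / D t)
           \<longlongrightarrow> - real k * 0 + real k * 1 * (1 * (1 + 0 ^ k)) / (real k * 1 - 0 * gsum_deriv k 0))
         (at_right 0)"
    using assms
    by (intro tendsto_intros param_z_to_0 param_z_small gsum tendsto_ident_at) auto
  then have lim: "((\<lambda>t. - real k * param_z k t
                  + real k * (param_z k t / t ^ k) * (gsum k t * (gsum k t + t ^ k)) / D t)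
           \<longlongrightarrow> 1) (at_right 0)"
    using assms by (simp add: power_0_left)
  have "\<forall>\<^sub>F t in at_right 0. - real k * param_z k t
           + real k * (param_z k t / t ^ k) * (gsum k t * (gsum k t + t ^ k)) / D t
         = (1 - 1 / (t * param_z_deriv k t)) / (- 1 / (real k * param_z k t))"
    using eventually_at_right_less[of 0]
  proof eventually_elim
    case (elim t)
    have A: "gsum k t > 0" using gsum_pos[OF assms] elim by simp
    have "D t > 0" using gsum_deriv_bound[OF assms elim] by (simp add: D_def)
    moreover have "param_z k t > 0" using param_z_pos[OF assms elim] .
    moreover have tk: "t * t ^ (k - 1) = t ^ k" using assms by (cases k) auto
    moreover have "gsum k t + t ^ k > 0" using A elim by (simp add: add_pos_pos)
    ultimately show ?case
      using A elim assms
      by (simp add: param_z_deriv_def D_def field_simps tk[symmetric])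
  qed
  then show "((\<lambda>t. (1 - 1 / (t * param_z_deriv k t)) / (- 1 / (real k * param_z k t))) \<longlongrightarrow> 1)
               (at_right 0)"
    by (rule Lim_transform_eventually[OF lim])
qed

lemma g_fun_large:
  assumes "k \<ge> 1"
  shows "g_fun k \<sim>[at_top] (\<lambda>z. exp (- real k * z))"
proof (rule asymp_equiv_reparam[OF param_g_large[OF assms] zinv_at_top[OF assms]])
  show "\<forall>\<^sub>F z in at_top. param_g k (zinv k z) = g_fun k z"
    using eventually_gt_at_top[of 0] by eventually_elim (simp add: g_fun_eq[OF assms])
  show "\<forall>\<^sub>F z in at_top. param_x k (zinv k z) ^ k = exp (- real k * z)"
    using eventually_gt_at_top[of 0]
  proof eventually_elim
    case (elim z)
    then have "param_x k (zinv k z) = exp (- z)"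
      using param_x_eq_exp[OF assms] zinv_right_inverse[OF assms elim] by simp
    then show ?case by (simp add: exp_of_nat_mult[symmetric])
  qed
qed

lemma g_fun_small:
  assumes "k \<ge> 1"
  shows "g_fun k \<sim>[at_right 0] (\<lambda>z. (1 / real k) * ln (1 / z))"
proof (rule asymp_equiv_reparam[OF param_g_small[OF assms] zinv_at_right_0[OF assms]])
  show "\<forall>\<^sub>F z in at_right 0. param_g k (zinv k z) = g_fun k z"
    using eventually_at_right_less[of 0] by eventually_elim (simp add: g_fun_eq[OF assms])
  show "\<forall>\<^sub>F z in at_right 0.
          1 / real k * ln (1 / param_z k (zinv k z)) = 1 / real k * ln (1 / z)"
    using eventually_at_right_less[of 0]
    by eventually_elim (simp add: zinv_right_inverse[OF assms])
qed

lemma g_fun_deriv_small: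
  assumes "k \<ge> 1"
  shows "deriv (g_fun k) \<sim>[at_right 0] (\<lambda>z. - 1 / (real k * z))"
proof (rule asymp_equiv_reparam[OF param_g_deriv_small[OF assms] zinv_at_right_0[OF assms]])
  show "\<forall>\<^sub>F z in at_right 0.
          1 - 1 / (zinv k z * param_z_deriv k (zinv k z)) = deriv (g_fun k) z"
    using eventually_at_right_less[of 0]
    by eventually_elim (simp add: DERIV_imp_deriv[OF has_deriv_g_fun[OF assms]])
  show "\<forall>\<^sub>F z in at_right 0. - 1 / (real k * param_z k (zinv k z)) = - 1 / (real k * z)"
    using eventually_at_right_less[of 0]
    by eventually_elim (simp add: zinv_right_inverse[OF assms])
qed

theorem mainTheorem10:
  fixes k :: nat
  assumes "k \<ge> 1"
  shows "(g_fun k \<sim>[at_top] (\<lambda>z. exp (- real k * z)))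
       \<and> (g_fun k \<sim>[at_right 0] (\<lambda>z. (1 / real k) * ln (1 / z)))
       \<and> (\<forall>z>0. g_fun k differentiable (at z))
       \<and> ((\<lambda>z. deriv (g_fun k) z) \<sim>[at_right 0] (\<lambda>z. - 1 / (real k * z)))"
proof (intro conjI allI impI)
  show "g_fun k \<sim>[at_top] (\<lambda>z. exp (- real k * z))"
    by (rule g_fun_large[OF assms])
  show "g_fun k \<sim>[at_right 0] (\<lambda>z. (1 / real k) * ln (1 / z))"
    by (rule g_fun_small[OF assms])
  show "g_fun k differentiable (at z)" if "z > 0" for z :: real
    using has_deriv_g_fun[OF assms that]
    by (meson differentiableI has_field_derivative_imp_has_derivative)
  show "(\<lambda>z. deriv (g_fun k) z) \<sim>[at_right 0] (\<lambda>z. - 1 / (real k * z))"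
    using g_fun_deriv_small[OF assms] by simp
qed

end
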